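(* For any alphabet size $q\ge2$ and any $i\in\{1,2,\dots,q\}$, no infinite family of $q$-ary codes with rate bounded away from zero is list-decodable (with list size $2^{o(n)}$, $n$ the block length) from a $\delta=\frac{q-i}{q}$ fraction of deletions and a $\gamma=\frac{i(i-1)}{q}$ fraction of insertions.
   Context: A $q$-ary code of block length $n$ is $C\subseteq\Sigma^n$ with $|\Sigma|=q$, rate $\log_q|C|/n$. $C$ is $L$-list decodable from $\delta n$ deletions and $\gamma n$ insertions if every string $y$ can be obtained from at most $L$ codewords by at most $\delta n$ deletions and at most $\gamma n$ insertions (deleting symbols of the codeword and inserting arbitrary symbols at arbitrary positions). *)

theory Defs
  imports "HOL-Analysis.Analysis" "HOL-Library.Sublist"
begin

definition qary_words :: "nat \<Rightarrow> nat \<Rightarrow> nat list set" where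
  "qary_words q n = {w. length w = n \<and> set w \<subseteq> {..<q}}"

definition is_qary_code :: "nat \<Rightarrow> nat \<Rightarrow> nat list set \<Rightarrow> bool" where
  "is_qary_code q n C \<longleftrightarrow> C \<subseteq> qary_words q n"

definition code_rate :: "nat \<Rightarrow> nat \<Rightarrow> nat list set \<Rightarrow> real" where
  "code_rate q n C = log (real q) (real (card C)) / real n"

text \<open>y is obtainable from x by at most d deletions and at most e insertions:
  delete some symbols of x (giving a subsequence z of x), then insert symbols into z
  to get y (so z is a subsequence of y).\<close>
definition del_ins_reachable :: "real \<Rightarrow> real \<Rightarrow> 'a list \<Rightarrow> 'a list \<Rightarrow> bool" where
  "del_ins_reachable d e x y \<longleftrightarrow>
     (\<exists>z. subseq z x \<and> subseq z y \<and>
          real (length x - length z) \<le> d \<and> real (length y - length z) \<le> e)"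

definition list_decodable_insdel ::
  "nat \<Rightarrow> nat \<Rightarrow> nat list set \<Rightarrow> real \<Rightarrow> real \<Rightarrow> real \<Rightarrow> bool" where
  "list_decodable_insdel q n C L \<delta> \<gamma> \<longleftrightarrow>
     (\<forall>y. set y \<subseteq> {..<q} \<longrightarrow>
        real (card {c \<in> C. del_ins_reachable (\<delta> * real n) (\<gamma> * real n) c y}) \<le> L)"

end

theory Submission
  imports Defs "HOL-Real_Asymp.Real_Asymp"
begin

text \<open>
  Split the alphabet into the q cyclic windows of i consecutive symbols. Every symbol lies in
  exactly i windows, so some window contains at least i n / q symbols of a given codeword c.
  Keeping only m = \<lceil>i n / q\<rceil> of them costs at most (q - i) n / q deletions, and the
  resulting word z embeds into a word of length at most i (m - 1) + 1 that runs periodically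
  through the window; this costs at most (i - 1)(m - 1) \<le> i (i - 1) n / q insertions.
  Hence every codeword reaches one of only q i (i n + 1) periodic words, so one of them is
  reached by at least |C| / (q i (i n + 1)) \<ge> 2^(R n) / poly(n) codewords, which exceeds
  any list size 2^o(n).
\<close>

definition cyclic_word :: "'a list \<Rightarrow> nat \<Rightarrow> nat \<Rightarrow> 'a list" where
  "cyclic_word xs t len = map (\<lambda>j. xs ! ((t + j) mod length xs)) [0..<len]"

lemma length_cyclic_word [simp]: "length (cyclic_word xs t len) = len"
  by (simp add: cyclic_word_def)

lemma cyclic_word_add:
  "cyclic_word xs t (d + l) = cyclic_word xs t d @ cyclic_word xs ((t + d) mod length xs) l"
proof -
  have "[0..<d + l] = [0..<d] @ map (\<lambda>j. j + d) [0..<l]"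
    using upt_add_eq_append[of 0 d l] map_add_upt[of d l] by (simp add: add.commute)
  moreover have "(t + (j + d)) mod length xs = ((t + d) mod length xs + j) mod length xs" for j
    by (metis add.assoc add.commute mod_add_left_eq)
  ultimately show ?thesis by (simp add: cyclic_word_def)
qed

lemma cyclic_word_Suc:
  "t < length xs \<Longrightarrow> cyclic_word xs t (Suc d) = xs ! t # cyclic_word xs (Suc t) d"
  unfolding cyclic_word_def by (simp only: map_upt_Suc) simp

text \<open>Each further letter of z is reached after at most one full period.\<close>
lemma subseq_cyclic_word:
  assumes "z \<noteq> []" and "set z \<subseteq> set xs"
  shows "\<exists>t < length xs. \<exists>len \<le> length xs * (length z - 1) + 1. subseq z (cyclic_word xs t len)"
  using assms
proof (induction z)
  case Nil
  then show ?case by simp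
next
  case (Cons a z)
  define p where "p = length xs"
  obtain t where t: "t < p" "xs ! t = a"
    using Cons.prems(2) by (auto simp: in_set_conv_nth p_def)
  show ?case
  proof (cases "z = []")
    case True
    then show ?thesis
      using t cyclic_word_Suc[of t xs 0] by (intro exI[of _ t] conjI exI[of _ 1]) (auto simp: p_def)
  next
    case False
    with Cons obtain t' len where t': "t' < p" "len \<le> p * (length z - 1) + 1"
      and sub: "subseq z (cyclic_word xs t' len)"
      by (auto simp: p_def)
    define d where "d = (if t < t' then t' - t else t' + p - t)"
    have "0 < d" "d \<le> p"
      using t t' by (auto simp: d_def)
    then obtain d' where d: "d = Suc d'" "d \<le> p"
      by (cases d) auto
    have "(t + d) mod p = t'"
    proof (cases "t < t'")
      case True
      then show ?thesis using t' by (simp add: d_def)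
    next
      case False
      then have "t + d = t' + p" using t by (simp add: d_def)
      then show ?thesis using t' by simp
    qed
    then have "cyclic_word xs t (d + len) = a # cyclic_word xs (Suc t) d' @ cyclic_word xs t' len"
      using cyclic_word_add[of xs t d len] cyclic_word_Suc[of t xs d'] t d(1)
      by (simp only: p_def) simp
    then have "subseq (a # z) (cyclic_word xs t (d + len))"
      using sub by (simp add: subseq_drop_many)
    moreover have "p * (length (a # z) - 1) = p * (length z - 1) + p"
      using False by (cases z) (simp_all add: algebra_simps)
    then have "d + len \<le> p * (length (a # z) - 1) + 1"
      using d(2) t'(2) by linarith
    ultimately show ?thesis
      using t by (intro exI[of _ t] conjI exI[of _ "d + len"]) (auto simp: p_def)
  qed
qed

definition window :: "nat \<Rightarrow> nat \<Rightarrow> nat \<Rightarrow> nat list" where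
  "window q i j = map (\<lambda>k. (j + k) mod q) [0..<i]"

lemma length_window [simp]: "length (window q i j) = i"
  by (simp add: window_def)

lemma card_windows_containing:
  assumes "x < q" and "i \<le> q"
  shows "i \<le> card {j \<in> {..<q}. x \<in> set (window q i j)}"
proof -
  define start where "start k = (if k \<le> x then x - k else x + q - k)" for k
  have "inj_on start {..<i}"
    using assms unfolding inj_on_def start_def by auto
  moreover have "start ` {..<i} \<subseteq> {j \<in> {..<q}. x \<in> set (window q i j)}"
  proof
    fix j assume "j \<in> start ` {..<i}"
    then obtain k where k: "k < i" "j = start k" by auto
    have "j < q"
      using k assms by (auto simp: start_def)
    moreover have "(j + k) mod q = x"
    proof (cases "k \<le> x")
      case True
      then show ?thesis using k assms by (simp add: start_def)
    next
      case False
      then have "j + k = x + q" using k assms by (simp add: start_def)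
      then show ?thesis using assms by simp
    qed
    ultimately show "j \<in> {j \<in> {..<q}. x \<in> set (window q i j)}"
      using k by (force simp: window_def)
  qed
  ultimately have "card (start ` {..<i}) \<le> card {j \<in> {..<q}. x \<in> set (window q i j)}"
    by (intro card_mono) simp_all
  then show ?thesis
    using card_image[OF \<open>inj_on start {..<i}\<close>] by simp
qed

lemma sum_window_hits_ge:
  assumes "set c \<subseteq> {..<q}" and "i \<le> q"
  shows "i * length c \<le> (\<Sum>j<q. length (filter (\<lambda>x. x \<in> set (window q i j)) c))"
  using assms(1)
proof (induction c)
  case Nil
  then show ?case by simp
next
  case (Cons x c)
  have "(\<Sum>j<q. length (filter (\<lambda>y. y \<in> set (window q i j)) (x # c)))
      = (\<Sum>j<q. (if x \<in> set (window q i j) then 1 else 0))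
        + (\<Sum>j<q. length (filter (\<lambda>y. y \<in> set (window q i j)) c))"
    by (subst sum.distrib[symmetric]) (rule sum.cong; simp)
  also have "(\<Sum>j<q. (if x \<in> set (window q i j) then 1 else 0))
      = card {j \<in> {..<q}. x \<in> set (window q i j)}"
    by (simp add: sum.inter_filter[symmetric])
  finally show ?case
    using Cons card_windows_containing[of x q i] assms(2) by simp
qed

lemma exists_ge_average:
  fixes f :: "nat \<Rightarrow> nat"
  assumes "0 < q" and "A \<le> (\<Sum>j<q. f j)"
  shows "\<exists>j<q. A \<le> q * f j"
proof (rule ccontr)
  assume "\<not> ?thesis"
  then have "(\<Sum>j<q. q * f j) < (\<Sum>j<q. A)"
    using assms(1) by (intro sum_strict_mono) auto
  then have "q * (\<Sum>j<q. f j) < q * A"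
    by (simp add: sum_distrib_left)
  then show False
    using assms(2) by (metis mult_le_mono2 not_le)
qed

lemma exists_window_subseq:
  assumes "set c \<subseteq> {..<q}" and "i \<le> q" and "q * m < i * length c + q"
  shows "\<exists>j<q. \<exists>z. subseq z c \<and> set z \<subseteq> set (window q i j) \<and> length z = m"
proof -
  have "0 < q"
    using assms(2,3) by (cases q) auto
  then obtain j where j: "j < q" "i * length c \<le> q * length (filter (\<lambda>x. x \<in> set (window q i j)) c)"
    using exists_ge_average[OF _ sum_window_hits_ge[OF assms(1,2)]] by blast
  define f where "f = filter (\<lambda>x. x \<in> set (window q i j)) c"
  have "q * m < q * Suc (length f)"
    using j(2) assms(3) by (simp add: f_def)
  then have "m \<le> length f"
    using mult_less_cancel1[of q m "Suc (length f)"] by simp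
  moreover have "subseq (take m f) c"
  proof -
    have "subseq (take m f) f"
      by (metis append_take_drop_id subseq_order.order_refl subseq_rev_drop_many)
    then show ?thesis
      using subseq_filter_left subseq_order.order_trans by (fastforce simp: f_def)
  qed
  moreover have "set (take m f) \<subseteq> set (window q i j)"
    using set_take_subset by (fastforce simp: f_def)
  ultimately show ?thesis
    using j(1) by (intro exI[of _ j] conjI exI[of _ "take m f"]) auto
qed

definition cyclic_window_words :: "nat \<Rightarrow> nat \<Rightarrow> nat \<Rightarrow> nat list set" where
  "cyclic_window_words q i n =
     (\<lambda>(j, t, len). cyclic_word (window q i j) t len) ` ({..<q} \<times> {..<i} \<times> {..i * n})"

lemma finite_cyclic_window_words: "finite (cyclic_window_words q i n)"
  by (simp add: cyclic_window_words_def)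

lemma card_cyclic_window_words_le: "card (cyclic_window_words q i n) \<le> q * i * (i * n + 1)"
  unfolding cyclic_window_words_def
  by (rule card_image_le[THEN order_trans]) (simp_all add: card_cartesian_product algebra_simps)

lemma cyclic_window_words_alphabet:
  "y \<in> cyclic_window_words q i n \<Longrightarrow> 0 < i \<Longrightarrow> set y \<subseteq> {..<q}"
  unfolding cyclic_window_words_def cyclic_word_def window_def by auto

lemma del_ins_reachableI:
  assumes "0 < q" and "subseq z x" and "subseq z y"
    and "q * (length x - length z) \<le> a * n" and "q * (length y - length z) \<le> b * n"
  shows "del_ins_reachable (real a / real q * real n) (real b / real q * real n) x y"
proof -
  have "real q * real (length x - length z) \<le> real a * real n"
    and "real q * real (length y - length z) \<le> real b * real n"
    using assms(4,5) by (metis of_nat_le_iff of_nat_mult)+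
  then show ?thesis
    using assms(1-3) unfolding del_ins_reachable_def
    by (intro exI[of _ z]) (simp add: field_simps)
qed

lemma mult_Suc_div_bounds:
  fixes a q :: nat
  assumes "0 < q" and "0 < a"
  shows "a \<le> q * Suc ((a - 1) div q)" and "q * ((a - 1) div q) < a"
proof -
  have "q * ((a - 1) div q) + (a - 1) mod q = a - 1"
    by (simp add: mult.commute)
  moreover have "(a - 1) mod q < q"
    using assms(1) by simp
  ultimately show "a \<le> q * Suc ((a - 1) div q)" and "q * ((a - 1) div q) < a"
    using assms(2) unfolding mult_Suc_right by linarith+
qed

text \<open>The m kept symbols satisfy m = \<lceil>i n / q\<rceil>.\<close>
lemma reachable_cyclic_window_word:
  assumes "set c \<subseteq> {..<q}" and "length c = n" and "1 \<le> n" and "1 \<le> i" and "i \<le> q"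
  shows "\<exists>y \<in> cyclic_window_words q i n.
           del_ins_reachable (real (q - i) / real q * real n) (real (i * (i - 1)) / real q * real n) c y"
proof -
  define m where "m = Suc ((i * n - 1) div q)"
  have "0 < q" and "0 < i * n"
    using assms(3-5) by auto
  then have lower: "i * n \<le> q * m" and upper: "q * (m - 1) < i * n"
    using mult_Suc_div_bounds unfolding m_def by simp_all
  then have "q * m < i * n + q"
    by (simp add: m_def)
  then obtain j z where j: "j < q" and z: "subseq z c" "set z \<subseteq> set (window q i j)" "length z = m"
    using exists_window_subseq[OF assms(1,5)] assms(2) by blast
  obtain t len where t: "t < i" and len: "len \<le> i * (m - 1) + 1"
    and zy: "subseq z (cyclic_word (window q i j) t len)"
    using subseq_cyclic_word[OF _ z(2)] z(3) by (fastforce simp: m_def)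
  have "q * (m - 1) < q * n"
    using upper mult_le_mono1[of i q n] assms(5) by linarith
  then have "m \<le> n"
    using \<open>0 < q\<close> by (simp add: m_def)
  then have "i * (m - 1) + 1 \<le> i * n"
    using assms(4) mult_le_mono2[of m n i] by (simp add: m_def)
  then have "cyclic_word (window q i j) t len \<in> cyclic_window_words q i n"
    using j t len unfolding cyclic_window_words_def by force
  moreover have "q * (n - m) \<le> (q - i) * n"
    using lower by (simp add: diff_mult_distrib diff_mult_distrib2)
  moreover have "q * (len - m) \<le> i * (i - 1) * n"
  proof -
    have "len - m \<le> (i - 1) * (m - 1)"
      using len by (simp add: diff_mult_distrib m_def)
    then have "q * (len - m) \<le> (i - 1) * (q * (m - 1))"
      by (metis mult.left_commute mult_le_mono2)
    also have "\<dots> \<le> i * (i - 1) * n"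
      using upper by (simp add: mult.assoc mult.left_commute)
    finally show ?thesis .
  qed
  ultimately show ?thesis
    using del_ins_reachableI[OF \<open>0 < q\<close> z(1) zy] z(3) assms(2) by fastforce
qed

lemma finite_qary_words: "finite (qary_words q n)"
proof -
  have "qary_words q n = {w. set w \<subseteq> {..<q} \<and> length w = n}"
    by (auto simp: qary_words_def)
  then show ?thesis
    by (simp add: finite_lists_length_eq)
qed

lemma list_decodable_insdel_nonneg: "list_decodable_insdel q n C L \<delta> \<gamma> \<Longrightarrow> 0 \<le> L"
  unfolding list_decodable_insdel_def by (metis empty_subsetI list.set(1) of_nat_0_le_iff order_trans)

lemma card_code_le_list_decodable:
  assumes dec: "list_decodable_insdel q n C L \<delta> \<gamma>" and "finite C" and "finite Y"
    and alphabet: "\<forall>y\<in>Y. set y \<subseteq> {..<q}"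
    and cover: "\<forall>c\<in>C. \<exists>y\<in>Y. del_ins_reachable (\<delta> * real n) (\<gamma> * real n) c y"
  shows "real (card C) \<le> real (card Y) * L"
proof -
  define A where "A y = {c \<in> C. del_ins_reachable (\<delta> * real n) (\<gamma> * real n) c y}" for y
  have "card C \<le> card (\<Union>y\<in>Y. A y)"
    using cover \<open>finite C\<close> \<open>finite Y\<close> by (intro card_mono) (auto simp: A_def)
  also have "\<dots> \<le> (\<Sum>y\<in>Y. card (A y))"
    by (rule card_UN_le[OF \<open>finite Y\<close>])
  finally have "real (card C) \<le> (\<Sum>y\<in>Y. real (card (A y)))"
    by (simp flip: of_nat_sum)
  also have "\<dots> \<le> real (card Y) * L"
    using dec alphabet by (intro sum_bounded_above) (auto simp: list_decodable_insdel_def A_def)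
  finally show ?thesis .
qed

lemma card_ge_of_code_rate:
  assumes "2 \<le> q" and "0 < n" and "0 < R" and "R \<le> code_rate q n C"
  shows "2 powr (R * real n) \<le> real (card C)"
proof -
  have rate: "R * real n \<le> log (real q) (real (card C))"
    using assms(2,4) by (simp add: code_rate_def field_simps)
  have "card C \<noteq> 0"
  proof
    assume "card C = 0"
    then have "R * real n \<le> 0"
      using rate by (simp add: log_def)
    then show False
      using assms(2,3) by (simp add: mult_le_0_iff)
  qed
  have "2 powr (R * real n) \<le> real q powr (R * real n)"
    using assms(1-3) by (intro powr_mono2) auto
  also have "\<dots> \<le> real q powr log (real q) (real (card C))"
    using rate assms(1) by (intro powr_mono) auto
  also have "\<dots> = real (card C)"
    using \<open>card C \<noteq> 0\<close> assms(1) by simp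
  finally show ?thesis .
qed

lemma card_le_list_decodable_insdel:
  assumes code: "is_qary_code q n C"
    and dec: "list_decodable_insdel q n C L (real (q - i) / real q) (real (i * (i - 1)) / real q)"
    and "1 \<le> n" and "1 \<le> i" and "i \<le> q"
  shows "real (card C) \<le> real (q * i * (i * n + 1)) * L"
proof -
  have words: "C \<subseteq> qary_words q n"
    using code by (simp add: is_qary_code_def)
  have "real (card C) \<le> real (card (cyclic_window_words q i n)) * L"
  proof (rule card_code_le_list_decodable[OF dec _ finite_cyclic_window_words])
    show "finite C"
      using words finite_qary_words by (rule finite_subset)
    show "\<forall>y\<in>cyclic_window_words q i n. set y \<subseteq> {..<q}"
      using cyclic_window_words_alphabet assms(4) by auto
    show "\<forall>c\<in>C. \<exists>y\<in>cyclic_window_words q i n.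
        del_ins_reachable (real (q - i) / real q * real n) (real (i * (i - 1)) / real q * real n) c y"
      using reachable_cyclic_window_word words assms(3-5) by (auto simp: qary_words_def)
  qed
  also have "\<dots> \<le> real (q * i * (i * n + 1)) * L"
    by (intro mult_right_mono of_nat_mono card_cyclic_window_words_le list_decodable_insdel_nonneg[OF dec])
  finally show ?thesis .
qed

theorem theorem5p1:
  fixes q i :: nat and N :: "nat set" and C :: "nat \<Rightarrow> nat list set"
    and L :: "nat \<Rightarrow> real" and R :: real
  assumes "q \<ge> 2" and "1 \<le> i" and "i \<le> q"
    and "infinite N"
    and "R > 0"
    and "\<forall>\<epsilon>>0. \<exists>n0. \<forall>n\<in>N. n \<ge> n0 \<longrightarrow> L n \<le> 2 powr (\<epsilon> * real n)"
  shows "\<not> (\<forall>n\<in>N. is_qary_code q n (C n) \<and> code_rate q n (C n) \<ge> R \<and>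
              list_decodable_insdel q n (C n) (L n)
                 (real (q - i) / real q) (real (i * (i - 1)) / real q))"
proof
  assume codes: "\<forall>n\<in>N. is_qary_code q n (C n) \<and> code_rate q n (C n) \<ge> R \<and>
              list_decodable_insdel q n (C n) (L n)
                 (real (q - i) / real q) (real (i * (i - 1)) / real q)"
  obtain n0 where list_size: "\<forall>n\<in>N. n \<ge> n0 \<longrightarrow> L n \<le> 2 powr (R / 2 * real n)"
    using assms(5,6) half_gt_zero by blast
  have "eventually (\<lambda>n::nat. real q * real i * (real i * real n + 1) * 2 powr (R / 2 * real n)
      < 2 powr (R * real n)) at_top"
    using assms(5) by real_asymp
  then obtain n1 where small: "\<And>n. n \<ge> n1 \<Longrightarrow> real q * real i * (real i * real n + 1)
      * 2 powr (R / 2 * real n) < 2 powr (R * real n)"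
    by (auto simp: eventually_at_top_linorder)
  obtain n where n: "n \<in> N" "n \<ge> max (max n0 n1) 1"
    using assms(4) infinite_nat_iff_unbounded_le by blast
  have "2 powr (R * real n) \<le> real (card (C n))"
    using card_ge_of_code_rate assms(1,5) n codes by simp
  also have "\<dots> \<le> real (q * i * (i * n + 1)) * L n"
    using card_le_list_decodable_insdel assms(2,3) n codes by simp
  also have "\<dots> \<le> real (q * i * (i * n + 1)) * 2 powr (R / 2 * real n)"
    using list_size n by (intro mult_left_mono) auto
  also have "\<dots> < 2 powr (R * real n)"
    using small[of n] n(2) unfolding of_nat_mult of_nat_add of_nat_1 by simp
  finally show False by simp
qed

end
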